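(* Let $\mathbf{X}=(X_1,\ldots,X_d)$ have mutually independent components and let $\mathbf{X}'$ be an independent copy of $\mathbf{X}$. For $A\subseteq\{1,\ldots,d\}$ define $\mathbf{X}^{\sim A}$ by $\mathbf{X}^{\sim A}_A=\mathbf{X}_A$ and $\mathbf{X}^{\sim A}_{-A}=\mathbf{X}'_{-A}$. Let $Y=\eta(\mathbf{X})$, $Y'=\eta(\mathbf{X}')$, $Y^{\sim A}=\eta(\mathbf{X}^{\sim A})$, and let $k_{\mathcal{Y}}$ be a positive definite kernel on the output space with $\mathbb{E}_{\xi\sim\mathrm{P}_{Y\mid\mathbf{X}_B=\mathbf{x}_B}}k_{\mathcal{Y}}(\xi,\xi)<\infty$ for all $B$ and $\mathbf{x}_B$. Then $$\mathbb{E}_{\mathbf{X}_A}\Big(\mathrm{MMD}^2\big(\mathrm{P}_Y,\mathrm{P}_{Y\mid\mathbf{X}_A}\big)\Big)=\mathbb{E}\,k_{\mathcal{Y}}(Y,Y^{\sim A})-\mathbb{E}\,k_{\mathcal{Y}}(Y,Y').$$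
   Context: $\mathbf{X}_A$ is the subvector with indices in $A$, $\mathbf{X}_{-A}$ the subvector with indices in $\{1,\ldots,d\}\setminus A$; $\mathrm{P}_{Y\mid\mathbf{X}_A}$ is the conditional law of $Y$ given $\mathbf{X}_A$. $\mathrm{MMD}^2(\mathrm{P},\mathrm{Q})=\mathbb{E}k_{\mathcal{Y}}(\xi,\xi')-2\mathbb{E}k_{\mathcal{Y}}(\xi,\zeta)+\mathbb{E}k_{\mathcal{Y}}(\zeta,\zeta')$ with $\xi,\xi'\sim\mathrm{P}$, $\zeta,\zeta'\sim\mathrm{Q}$ independent. *)

theory Defs
  imports "HOL-Probability.Probability"
begin

definition pd_kernel :: "'y measure \<Rightarrow> ('y \<Rightarrow> 'y \<Rightarrow> real) \<Rightarrow> bool" where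
  "pd_kernel N k \<longleftrightarrow>
     (\<forall>x\<in>space N. \<forall>y\<in>space N. k x y = k y x) \<and>
     (\<forall>(n::nat) (c::nat \<Rightarrow> real) (y::nat \<Rightarrow> 'y). (\<forall>i<n. y i \<in> space N) \<longrightarrow>
        0 \<le> (\<Sum>i<n. \<Sum>j<n. c i * c j * k (y i) (y j)))"

definition MMD2 :: "('y \<Rightarrow> 'y \<Rightarrow> real) \<Rightarrow> 'y measure \<Rightarrow> 'y measure \<Rightarrow> real" where
  "MMD2 k P Q =
     (\<integral>z. case_prod k z \<partial>(P \<Otimes>\<^sub>M P))
     - 2 * (\<integral>z. case_prod k z \<partial>(P \<Otimes>\<^sub>M Q))
     + (\<integral>z. case_prod k z \<partial>(Q \<Otimes>\<^sub>M Q))"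

definition is_cond_law ::
  "'w measure \<Rightarrow> 'b measure \<Rightarrow> ('w \<Rightarrow> 'b) \<Rightarrow> 'y measure \<Rightarrow> ('w \<Rightarrow> 'y) \<Rightarrow> ('b \<Rightarrow> 'y measure) \<Rightarrow> bool"
where
  "is_cond_law P MW W N Z K \<longleftrightarrow>
     K \<in> measurable MW (prob_algebra N) \<and>
     (\<forall>S\<in>sets MW. \<forall>T\<in>sets N.
        measure P {\<omega>\<in>space P. W \<omega> \<in> S \<and> Z \<omega> \<in> T}
        = (\<integral>x. indicator S x * measure (K x) T \<partial>(distr P MW W)))"

end

theory Submission
  imports Defs
begin

text \<open>
  Write P_Y for the law of Y = eta X and K_x for the conditional law of Y given X_A = x. Expanding
  MMD^2 (P_Y, K_x) gives c - 2 T2 x + T3 x, where c, T2 x and T3 x are the integrals of k against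
  P_Y \<Otimes> P_Y, P_Y \<Otimes> K_x and K_x \<Otimes> K_x. The kernels K_x average to P_Y over the law of X_A, so
  E T2 (X_A) = c, and c = E k (Y, Y') because Y' is an independent copy of Y.

  For the last term write Y = g (X_A, X_{-A}) and Y^~A = g (X_A, X'_{-A}); the three blocks
  X_A, X_{-A}, X'_{-A} are independent and X'_{-A} is distributed like X_{-A}. Integrating one
  argument of k against K_{X_A} and the other against the law of X_{-A}, Fubini's theorem and two
  applications of the disintegration E f (X_A, Y) = E \<integral> f (X_A, y) dK_{X_A} (y) identify E T3 (X_A)
  with E k (Y, Y^~A), without using uniqueness of conditional laws. All integrability comes from
  |k a b| \<le> (k a a + k b b) / 2, valid for positive definite k.
\<close>

section \<open>Positive definite kernels\<close>

lemma pd_kernel_sym: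
  assumes "pd_kernel N k" "a \<in> space N" "b \<in> space N"
  shows "k a b = k b a"
  using assms unfolding pd_kernel_def by blast

lemma pd_kernel_quadratic_form_nonneg:
  fixes c :: "nat \<Rightarrow> real"
  assumes "pd_kernel N k" "\<forall>i<n. y i \<in> space N"
  shows "0 \<le> (\<Sum>i<n. \<Sum>j<n. c i * c j * k (y i) (y j))"
  using assms unfolding pd_kernel_def by blast

lemma pd_kernel_diag_nonneg:
  assumes "pd_kernel N k" "a \<in> space N"
  shows "0 \<le> k a a"
  using pd_kernel_quadratic_form_nonneg[OF assms(1), of 1 "\<lambda>_. a" "\<lambda>_. 1"] assms(2) by simp

lemma pd_kernel_abs_le:
  assumes pd: "pd_kernel N k" and a: "a \<in> space N" and b: "b \<in> space N"
  shows "\<bar>k a b\<bar> \<le> (k a a + k b b) / 2"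
proof -
  define y where "y i = (if i = 0 then a else b)" for i :: nat
  have y: "\<forall>i<2. y i \<in> space N" using a b by (simp add: y_def)
  have "0 \<le> (\<Sum>i<2. \<Sum>j<2. s i * s j * k (y i) (y j))" for s
    by (rule pd_kernel_quadratic_form_nonneg[OF pd y])
  from this[of "\<lambda>i. if i = 0 then 1 else -1"] this[of "\<lambda>_. 1"]
  have "0 \<le> k a a - 2 * k a b + k b b" "0 \<le> k a a + 2 * k a b + k b b"
    using pd_kernel_sym[OF pd a b] by (simp_all add: y_def numeral_2_eq_2)
  then show ?thesis by (simp add: abs_le_iff field_simps)
qed

lemma integrable_pd_kernel:
  assumes pd: "pd_kernel N k" and k: "case_prod k \<in> borel_measurable (N \<Otimes>\<^sub>M N)"
    and a: "a \<in> M \<rightarrow>\<^sub>M N" and b: "b \<in> M \<rightarrow>\<^sub>M N"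
    and ia: "integrable M (\<lambda>w. k (a w) (a w))" and ib: "integrable M (\<lambda>w. k (b w) (b w))"
  shows "integrable M (\<lambda>w. k (a w) (b w))"
proof (rule Bochner_Integration.integrable_bound)
  show "integrable M (\<lambda>w. (k (a w) (a w) + k (b w) (b w)) / 2)"
    using ia ib by simp
  show "(\<lambda>w. k (a w) (b w)) \<in> borel_measurable M"
    using measurable_compose[OF measurable_Pair[OF a b] k] by simp
  show "AE w in M. norm (k (a w) (b w)) \<le> norm ((k (a w) (a w) + k (b w) (b w)) / 2)"
  proof (rule AE_I2)
    fix w assume "w \<in> space M"
    then have "a w \<in> space N" "b w \<in> space N"
      using a b by (auto dest: measurable_space)
    then show "norm (k (a w) (b w)) \<le> norm ((k (a w) (a w) + k (b w) (b w)) / 2)"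
      using pd_kernel_abs_le[OF pd] pd_kernel_diag_nonneg[OF pd] by fastforce
  qed
qed

lemma distr_pair_measure_snd:
  assumes "prob_space M1" "sigma_finite_measure M2"
  shows "distr (M1 \<Otimes>\<^sub>M M2) M2 snd = M2"
proof -
  interpret pair_sigma_finite M1 M2
    using assms by (simp add: pair_sigma_finite_def prob_space_imp_sigma_finite)
  have "distr (M1 \<Otimes>\<^sub>M M2) M2 snd = distr (M2 \<Otimes>\<^sub>M M1) M2 fst"
    by (subst distr_pair_swap) (simp add: distr_distr comp_def split_beta')
  then show ?thesis
    using prob_space.distr_pair_fst[OF assms(1)] by simp
qed

lemma integrable_pd_kernel_pair_measure:
  assumes pd: "pd_kernel N k" and k: "case_prod k \<in> borel_measurable (N \<Otimes>\<^sub>M N)"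
    and M1: "prob_space M1" and M2: "prob_space M2"
    and a: "a \<in> M1 \<rightarrow>\<^sub>M N" and b: "b \<in> M2 \<rightarrow>\<^sub>M N"
    and ia: "integrable M1 (\<lambda>u. k (a u) (a u))" and ib: "integrable M2 (\<lambda>v. k (b v) (b v))"
  shows "integrable (M1 \<Otimes>\<^sub>M M2) (\<lambda>(u, v). k (a u) (b v))"
proof -
  have "integrable (distr (M1 \<Otimes>\<^sub>M M2) M1 fst) (\<lambda>u. k (a u) (a u))"
    using ia by (simp add: prob_space.distr_pair_fst[OF M2])
  then have "integrable (M1 \<Otimes>\<^sub>M M2) (\<lambda>p. k (a (fst p)) (a (fst p)))"
    using ia by (subst (asm) integrable_distr_eq) auto
  moreover have "integrable (distr (M1 \<Otimes>\<^sub>M M2) M2 snd) (\<lambda>v. k (b v) (b v))"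
    using ib by (simp add: distr_pair_measure_snd M1 M2 prob_space_imp_sigma_finite)
  then have "integrable (M1 \<Otimes>\<^sub>M M2) (\<lambda>p. k (b (snd p)) (b (snd p)))"
    using ib by (subst (asm) integrable_distr_eq) auto
  ultimately show ?thesis
    using integrable_pd_kernel[OF pd k, of "\<lambda>p. a (fst p)" "M1 \<Otimes>\<^sub>M M2" "\<lambda>p. b (snd p)"] a b
    by (simp add: split_beta')
qed

lemma integral_pd_kernel_Fubini:
  fixes k :: "'y \<Rightarrow> 'y \<Rightarrow> real"
  assumes pd: "pd_kernel N k" and k: "case_prod k \<in> borel_measurable (N \<Otimes>\<^sub>M N)"
    and Q: "prob_space Q" "sets Q = sets N" and R: "prob_space R" and b: "b \<in> R \<rightarrow>\<^sub>M N"
    and iQ: "integrable Q (\<lambda>y. k y y)" and iR: "integrable R (\<lambda>v. k (b v) (b v))"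
  shows "integrable R (\<lambda>v. \<integral>y. k y (b v) \<partial>Q)"
    and "(\<integral>z. (\<lambda>(y, v). k y (b v)) z \<partial>(Q \<Otimes>\<^sub>M R)) = (\<integral>v. \<integral>y. k y (b v) \<partial>Q \<partial>R)"
    and "(\<integral>v. \<integral>y. k y (b v) \<partial>Q \<partial>R) = (\<integral>y. \<integral>v. k y (b v) \<partial>R \<partial>Q)"
proof -
  interpret pair_sigma_finite Q R
    using Q R by (simp add: pair_sigma_finite_def prob_space_imp_sigma_finite)
  have "integrable (Q \<Otimes>\<^sub>M R) (\<lambda>(y, v). k y (b v))"
    using integrable_pd_kernel_pair_measure[OF pd k Q(1) R measurable_ident_sets[OF Q(2)] b] iQ iR by simp
  from integrable_snd[OF this] integral_snd[OF this] Fubini_integral[OF this]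
  show "integrable R (\<lambda>v. \<integral>y. k y (b v) \<partial>Q)"
    and "(\<integral>z. (\<lambda>(y, v). k y (b v)) z \<partial>(Q \<Otimes>\<^sub>M R)) = (\<integral>v. \<integral>y. k y (b v) \<partial>Q \<partial>R)"
    and "(\<integral>v. \<integral>y. k y (b v) \<partial>Q \<partial>R) = (\<integral>y. \<integral>v. k y (b v) \<partial>R \<partial>Q)"
    by simp_all
qed

lemma abs_integral_pd_kernel_le:
  assumes pd: "pd_kernel N k" and k: "case_prod k \<in> borel_measurable (N \<Otimes>\<^sub>M N)"
    and Q: "prob_space Q" "sets Q = sets N"
    and iQ: "integrable Q (\<lambda>y. k y y)" and z: "z \<in> space N"
  shows "\<bar>\<integral>y. k y z \<partial>Q\<bar> \<le> ((\<integral>y. k y y \<partial>Q) + k z z) / 2"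
proof -
  interpret prob_space Q by (rule Q(1))
  have spQ: "space Q = space N" by (rule sets_eq_imp_space_eq[OF Q(2)])
  have int: "integrable Q (\<lambda>y. k y z)"
    using integrable_pd_kernel[OF pd k measurable_ident_sets[OF Q(2)] measurable_const[OF z] iQ] by simp
  have "\<bar>\<integral>y. k y z \<partial>Q\<bar> \<le> (\<integral>y. \<bar>k y z\<bar> \<partial>Q)"
    using integral_norm_bound[of Q "\<lambda>y. k y z"] by simp
  also have "\<dots> \<le> (\<integral>y. (k y y + k z z) / 2 \<partial>Q)"
    using int iQ pd_kernel_abs_le[OF pd _ z] by (intro integral_mono) (auto simp: spQ)
  also have "\<dots> = ((\<integral>y. k y y \<partial>Q) + k z z) / 2"
    using iQ by (simp add: prob_space)
  finally show ?thesis .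
qed

section \<open>Integrals against kernels and independent pairs\<close>

lemma borel_measurable_integral_kernel:
  fixes f :: "'l \<Rightarrow> 'n \<Rightarrow> real"
  assumes f[measurable]: "(\<lambda>(x, y). f x y) \<in> borel_measurable (L \<Otimes>\<^sub>M N)"
    and K[measurable]: "K \<in> L \<rightarrow>\<^sub>M subprob_algebra N"
  shows "(\<lambda>x. \<integral>y. f x y \<partial>K x) \<in> borel_measurable L"
proof -
  note integral_measurable_subprob_algebra[measurable] measurable_distr2[measurable]
  have "(\<lambda>x. \<integral>p. (\<lambda>(x, y). f x y) p \<partial>distr (K x) (L \<Otimes>\<^sub>M N) (Pair x)) \<in> borel_measurable L"
    by measurable
  then show ?thesis
    by (rule measurable_cong[THEN iffD1, rotated])
       (subst integral_distr, auto simp: space_subprob_algebra dest!: measurable_space[OF K])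
qed

lemma borel_measurable_integral_kernel_param:
  fixes k :: "'y \<Rightarrow> 'y \<Rightarrow> real"
  assumes K: "K \<in> L \<rightarrow>\<^sub>M subprob_algebra N" and k: "case_prod k \<in> borel_measurable (N \<Otimes>\<^sub>M N)"
  shows "(\<lambda>(x, z). \<integral>y. k y z \<partial>K x) \<in> borel_measurable (L \<Otimes>\<^sub>M N)"
proof -
  have "(\<lambda>(p, y). k y (snd p)) \<in> borel_measurable ((L \<Otimes>\<^sub>M N) \<Otimes>\<^sub>M N)"
    using measurable_compose[OF measurable_Pair[OF measurable_snd measurable_compose[OF measurable_fst measurable_snd]] k]
    by (simp add: split_beta')
  from borel_measurable_integral_kernel[OF this measurable_compose[OF measurable_fst K]]
  show ?thesis by (simp add: split_beta')
qed

lemma borel_measurable_integral_resample: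
  fixes k :: "'y \<Rightarrow> 'y \<Rightarrow> real"
  assumes \<nu>: "prob_space \<nu>" "sets \<nu> = sets SV"
    and g: "g \<in> SW \<Otimes>\<^sub>M SV \<rightarrow>\<^sub>M N" and k: "case_prod k \<in> borel_measurable (N \<Otimes>\<^sub>M N)"
  shows "(\<lambda>(x, y). \<integral>v. k y (g (x, v)) \<partial>\<nu>) \<in> borel_measurable (SW \<Otimes>\<^sub>M N)"
proof -
  have "(\<lambda>(p, v). k (snd p) (g (fst p, v))) \<in> borel_measurable ((SW \<Otimes>\<^sub>M N) \<Otimes>\<^sub>M SV)"
    using g k by measurable
  moreover have "(\<lambda>_. \<nu>) \<in> SW \<Otimes>\<^sub>M N \<rightarrow>\<^sub>M subprob_algebra SV"
    using \<nu> by (intro measurable_const) (simp add: space_subprob_algebra prob_space_imp_subprob_space)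
  ultimately show ?thesis
    using borel_measurable_integral_kernel[where K="\<lambda>_. \<nu>"] by (simp add: split_beta')
qed

lemma
  fixes a :: "'x \<Rightarrow> ennreal"
  assumes a: "a \<in> borel_measurable M" and fin: "(\<integral>\<^sup>+x. a x \<partial>M) < \<infinity>"
  shows integrable_enn2real: "integrable M (\<lambda>x. enn2real (a x))"
    and integral_enn2real: "(\<integral>x. enn2real (a x) \<partial>M) = enn2real (\<integral>\<^sup>+x. a x \<partial>M)"
proof -
  have "AE x in M. a x \<noteq> \<infinity>"
    using a fin by (intro nn_integral_PInf_AE) auto
  then have eq: "(\<integral>\<^sup>+x. ennreal (enn2real (a x)) \<partial>M) = (\<integral>\<^sup>+x. a x \<partial>M)"
    by (intro nn_integral_cong_AE) (auto simp: less_top)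
  show "integrable M (\<lambda>x. enn2real (a x))"
    using a fin eq by (intro integrableI_bounded) auto
  show "(\<integral>x. enn2real (a x) \<partial>M) = enn2real (\<integral>\<^sup>+x. a x \<partial>M)"
    using a eq by (subst integral_eq_nn_integral) auto
qed

lemma nn_integral_abs_split:
  fixes f :: "'x \<Rightarrow> real"
  assumes "f \<in> borel_measurable M"
  shows "(\<integral>\<^sup>+x. ennreal \<bar>f x\<bar> \<partial>M) = (\<integral>\<^sup>+x. ennreal (f x) \<partial>M) + (\<integral>\<^sup>+x. ennreal (- f x) \<partial>M)"
proof -
  have "(\<integral>\<^sup>+x. ennreal \<bar>f x\<bar> \<partial>M) = (\<integral>\<^sup>+x. ennreal (f x) + ennreal (- f x) \<partial>M)"
    by (intro nn_integral_cong) (auto simp: abs_real_def ennreal_neg)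
  also have "\<dots> = (\<integral>\<^sup>+x. ennreal (f x) \<partial>M) + (\<integral>\<^sup>+x. ennreal (- f x) \<partial>M)"
    using assms by (intro nn_integral_add) auto
  finally show ?thesis .
qed

lemma integral_kernel_eq_nn_integral_parts:
  fixes f :: "'x \<Rightarrow> 'y \<Rightarrow> real"
  assumes K[measurable]: "K \<in> \<mu> \<rightarrow>\<^sub>M subprob_algebra N"
    and f[measurable]: "(\<lambda>(x, y). f x y) \<in> borel_measurable (\<mu> \<Otimes>\<^sub>M N)"
    and fin: "(\<integral>\<^sup>+x. \<integral>\<^sup>+y. ennreal \<bar>f x y\<bar> \<partial>K x \<partial>\<mu>) < \<infinity>"
  shows "integrable \<mu> (\<lambda>x. \<integral>y. f x y \<partial>K x)"
    and "(\<integral>x. \<integral>y. f x y \<partial>K x \<partial>\<mu>) =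
           enn2real (\<integral>\<^sup>+x. \<integral>\<^sup>+y. ennreal (f x y) \<partial>K x \<partial>\<mu>)
         - enn2real (\<integral>\<^sup>+x. \<integral>\<^sup>+y. ennreal (- f x y) \<partial>K x \<partial>\<mu>)" (is ?integral)
proof -
  note nn_integral_measurable_subprob_algebra2[measurable]
  define pos where "pos x = (\<integral>\<^sup>+y. ennreal (f x y) \<partial>K x)" for x
  define neg where "neg x = (\<integral>\<^sup>+y. ennreal (- f x y) \<partial>K x)" for x
  have [measurable]: "pos \<in> borel_measurable \<mu>" "neg \<in> borel_measurable \<mu>"
    unfolding pos_def neg_def by measurable
  have fx[measurable]: "f x \<in> borel_measurable (K x)" if "x \<in> space \<mu>" for x
  proof -
    have "sets (K x) = sets N"
      using measurable_space[OF K that] by (simp add: space_subprob_algebra)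
    then show ?thesis
      using that by (simp add: measurable_cong_sets[of "K x" N])
  qed
  have abs_split: "(\<integral>\<^sup>+y. ennreal \<bar>f x y\<bar> \<partial>K x) = pos x + neg x" if "x \<in> space \<mu>" for x
    unfolding pos_def neg_def using fx[OF that] by (rule nn_integral_abs_split)
  have "(\<integral>\<^sup>+x. pos x + neg x \<partial>\<mu>) < \<infinity>"
    using fin by (subst (asm) nn_integral_cong[OF abs_split]) auto
  then have fin_pos: "(\<integral>\<^sup>+x. pos x \<partial>\<mu>) < \<infinity>" and fin_neg: "(\<integral>\<^sup>+x. neg x \<partial>\<mu>) < \<infinity>"
    by (simp_all add: nn_integral_add)
  have ae: "AE x in \<mu>. enn2real (pos x) - enn2real (neg x) = (\<integral>y. f x y \<partial>K x)"
  proof -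
    have "AE x in \<mu>. pos x + neg x \<noteq> \<infinity>"
      using fin_pos fin_neg by (intro nn_integral_PInf_AE) (auto simp: nn_integral_add)
    with AE_space show ?thesis
    proof eventually_elim
      case (elim x)
      then have "integrable (K x) (f x)"
        using abs_split by (intro integrableI_bounded) (auto simp: less_top)
      then show ?case
        unfolding pos_def neg_def by (simp add: real_lebesgue_integral_def)
    qed
  qed
  have meas: "(\<lambda>x. \<integral>y. f x y \<partial>K x) \<in> borel_measurable \<mu>"
    by (rule borel_measurable_integral_kernel[OF f K])
  have int_pos: "integrable \<mu> (\<lambda>x. enn2real (pos x))" and int_neg: "integrable \<mu> (\<lambda>x. enn2real (neg x))"
    using fin_pos fin_neg by (simp_all add: integrable_enn2real)
  show "integrable \<mu> (\<lambda>x. \<integral>y. f x y \<partial>K x)"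
    using int_pos int_neg meas ae by (intro integrable_cong_AE_imp[OF _ meas ae]) simp
  have "(\<integral>x. \<integral>y. f x y \<partial>K x \<partial>\<mu>) = (\<integral>x. enn2real (pos x) - enn2real (neg x) \<partial>\<mu>)"
    using int_pos int_neg meas ae by (intro integral_cong_AE) (auto simp: eq_commute)
  also have "\<dots> = enn2real (\<integral>\<^sup>+x. pos x \<partial>\<mu>) - enn2real (\<integral>\<^sup>+x. neg x \<partial>\<mu>)"
    using int_pos int_neg fin_pos fin_neg by (simp add: integral_enn2real)
  finally show ?integral
    unfolding pos_def neg_def .
qed

lemma (in prob_space) integral_independent_pair:
  fixes f :: "'u \<Rightarrow> 'v \<Rightarrow> real"
  assumes U: "random_variable S U" and V: "random_variable T V"
    and law: "distr M (S \<Otimes>\<^sub>M T) (\<lambda>\<omega>. (U \<omega>, V \<omega>)) = distr M S U \<Otimes>\<^sub>M distr M T V"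
    and f: "(\<lambda>(u, v). f u v) \<in> borel_measurable (S \<Otimes>\<^sub>M T)"
    and int: "integrable M (\<lambda>\<omega>. f (U \<omega>) (V \<omega>))"
  shows "AE u in distr M S U. integrable (distr M T V) (f u)"
    and "integrable (distr M S U) (\<lambda>u. \<integral>v. f u v \<partial>distr M T V)"
    and "(\<integral>\<omega>. f (U \<omega>) (V \<omega>) \<partial>M) = (\<integral>u. \<integral>v. f u v \<partial>distr M T V \<partial>distr M S U)"
proof -
  interpret UV: pair_prob_space "distr M S U" "distr M T V"
    using U V by (simp add: pair_prob_space_def pair_sigma_finite_def prob_space_imp_sigma_finite prob_space_distr)
  have UV: "(\<lambda>\<omega>. (U \<omega>, V \<omega>)) \<in> M \<rightarrow>\<^sub>M S \<Otimes>\<^sub>M T"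
    using U V by (rule measurable_Pair)
  have int_pair: "integrable (distr M S U \<Otimes>\<^sub>M distr M T V) (\<lambda>(u, v). f u v)"
    unfolding law[symmetric] using int by (subst integrable_distr_eq[OF UV f]) simp
  show "AE u in distr M S U. integrable (distr M T V) (f u)"
    using UV.AE_integrable_fst[OF int_pair] by simp
  show "integrable (distr M S U) (\<lambda>u. \<integral>v. f u v \<partial>distr M T V)"
    by (rule UV.integrable_fst[OF int_pair])
  show "(\<integral>\<omega>. f (U \<omega>) (V \<omega>) \<partial>M) = (\<integral>u. \<integral>v. f u v \<partial>distr M T V \<partial>distr M S U)"
    unfolding UV.integral_fst[OF int_pair] law[symmetric] by (subst integral_distr[OF UV f]) simp
qed

lemma (in prob_space) distr_pair_compose_product:
  assumes U: "random_variable S U" and V: "random_variable T V"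
    and law: "distr M (S \<Otimes>\<^sub>M T) (\<lambda>\<omega>. (U \<omega>, V \<omega>)) = distr M S U \<Otimes>\<^sub>M distr M T V"
    and f: "f \<in> S \<rightarrow>\<^sub>M S'" and g: "g \<in> T \<rightarrow>\<^sub>M T'"
  shows "distr M (S' \<Otimes>\<^sub>M T') (\<lambda>\<omega>. (f (U \<omega>), g (V \<omega>)))
           = distr M S' (\<lambda>\<omega>. f (U \<omega>)) \<Otimes>\<^sub>M distr M T' (\<lambda>\<omega>. g (V \<omega>))"
proof -
  have fg: "(\<lambda>(x, y). (f x, g y)) \<in> S \<Otimes>\<^sub>M T \<rightarrow>\<^sub>M S' \<Otimes>\<^sub>M T'"
    using f g by measurable
  have sf: "sigma_finite_measure (distr (distr M T V) T' g)"
    using V g by (simp add: distr_distr comp_def prob_space_imp_sigma_finite prob_space_distr)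
  have "distr M (S' \<Otimes>\<^sub>M T') (\<lambda>\<omega>. (f (U \<omega>), g (V \<omega>)))
      = distr (distr M (S \<Otimes>\<^sub>M T) (\<lambda>\<omega>. (U \<omega>, V \<omega>))) (S' \<Otimes>\<^sub>M T') (\<lambda>(x, y). (f x, g y))"
    using U V fg by (subst distr_distr) (auto simp: comp_def)
  also have "\<dots> = distr (distr M S U) S' f \<Otimes>\<^sub>M distr (distr M T V) T' g"
    unfolding law using f g sf
    by (intro pair_measure_distr[symmetric]) (auto simp: measurable_distr_eq1)
  also have "\<dots> = distr M S' (\<lambda>\<omega>. f (U \<omega>)) \<Otimes>\<^sub>M distr M T' (\<lambda>\<omega>. g (V \<omega>))"
    using U V f g by (simp add: distr_distr comp_def)
  finally show ?thesis .
qed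

section \<open>Disintegration along a conditional law\<close>

lemma is_cond_lawD:
  assumes "is_cond_law P SW W N Z K"
  shows "K \<in> SW \<rightarrow>\<^sub>M subprob_algebra N"
    and "x \<in> space SW \<Longrightarrow> prob_space (K x)"
    and "x \<in> space SW \<Longrightarrow> sets (K x) = sets N"
  using assms measurable_space[of K SW "prob_algebra N" x]
  by (auto simp: is_cond_law_def space_prob_algebra intro: measurable_prob_algebraD)

lemma measurable_distr_Pair_kernel:
  assumes K: "K \<in> L \<rightarrow>\<^sub>M subprob_algebra N"
  shows "(\<lambda>x. distr (K x) (L \<Otimes>\<^sub>M N) (Pair x)) \<in> L \<rightarrow>\<^sub>M subprob_algebra (L \<Otimes>\<^sub>M N)"
  using K by (intro measurable_distr2[where M=N]) (auto simp: split_beta')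

lemma emeasure_distr_Pair_times:
  assumes x: "x \<in> space L" and Q: "sets Q = sets N" and S: "S \<in> sets L" and T: "T \<in> sets N"
  shows "emeasure (distr Q (L \<Otimes>\<^sub>M N) (Pair x)) (S \<times> T) = indicator S x * emeasure Q T"
proof -
  have Pair_x: "Pair x \<in> Q \<rightarrow>\<^sub>M L \<Otimes>\<^sub>M N"
    using measurable_Pair1'[OF x] by (simp add: measurable_cong_sets[OF Q refl])
  have "Pair x -` (S \<times> T) \<inter> space Q = (if x \<in> S then T else {})"
    using sets.sets_into_space[OF T] sets_eq_imp_space_eq[OF Q] by auto
  then show ?thesis
    using Pair_x S T by (subst emeasure_distr) (auto simp: indicator_def)
qed

lemma emeasure_bind_cond_law_times:
  assumes P: "prob_space P" and W: "W \<in> P \<rightarrow>\<^sub>M SW"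
    and cl: "is_cond_law P SW W N Z K"
    and S: "S \<in> sets SW" and T: "T \<in> sets N"
  shows "emeasure (distr P SW W \<bind> (\<lambda>x. distr (K x) (SW \<Otimes>\<^sub>M N) (Pair x))) (S \<times> T)
           = emeasure P {\<omega>\<in>space P. W \<omega> \<in> S \<and> Z \<omega> \<in> T}"
proof -
  define \<mu> where "\<mu> = distr P SW W"
  interpret \<mu>: prob_space \<mu>
    unfolding \<mu>_def using P W by (simp add: prob_space.prob_space_distr)
  have K: "K \<in> SW \<rightarrow>\<^sub>M prob_algebra N"
    using cl by (simp add: is_cond_law_def)
  have measure_KT: "(\<lambda>x. measure (K x) T) \<in> borel_measurable \<mu>"
    using measurable_compose[OF K measurable_measure_prob_algebra[OF T]] by (simp add: \<mu>_def)
  have "emeasure (\<mu> \<bind> (\<lambda>x. distr (K x) (SW \<Otimes>\<^sub>M N) (Pair x))) (S \<times> T)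
      = (\<integral>\<^sup>+x. emeasure (distr (K x) (SW \<Otimes>\<^sub>M N) (Pair x)) (S \<times> T) \<partial>\<mu>)"
    using measurable_distr_Pair_kernel[OF is_cond_lawD(1)[OF cl]] S T \<mu>.not_empty
    by (subst emeasure_bind[where N="SW \<Otimes>\<^sub>M N"]) (auto simp: \<mu>_def)
  also have "\<dots> = (\<integral>\<^sup>+x. ennreal (indicator S x * measure (K x) T) \<partial>\<mu>)"
  proof (intro nn_integral_cong)
    fix x assume "x \<in> space \<mu>"
    then have x: "x \<in> space SW" by (simp add: \<mu>_def)
    have "emeasure (K x) T = measure (K x) T"
      using finite_measure.emeasure_eq_measure[OF prob_space.finite_measure[OF is_cond_lawD(2)[OF cl x]]] .
    with emeasure_distr_Pair_times[OF x is_cond_lawD(3)[OF cl x] S T]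
    show "emeasure (distr (K x) (SW \<Otimes>\<^sub>M N) (Pair x)) (S \<times> T) = ennreal (indicator S x * measure (K x) T)"
      by (simp add: indicator_def)
  qed
  also have "\<dots> = ennreal (\<integral>x. indicator S x * measure (K x) T \<partial>\<mu>)"
    using S measure_KT prob_space.prob_le_1[OF is_cond_lawD(2)[OF cl]]
    by (intro nn_integral_eq_integral \<mu>.integrable_const_bound[where B=1]) (auto simp: \<mu>_def indicator_def)
  also have "\<dots> = emeasure P {\<omega>\<in>space P. W \<omega> \<in> S \<and> Z \<omega> \<in> T}"
    using cl S T finite_measure.emeasure_eq_measure[OF prob_space.finite_measure[OF P]]
    by (simp add: is_cond_law_def \<mu>_def)
  finally show ?thesis
    unfolding \<mu>_def .
qed

lemma distr_pair_eq_bind_cond_law: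
  assumes P: "prob_space P"
    and W[measurable]: "W \<in> P \<rightarrow>\<^sub>M SW" and Z[measurable]: "Z \<in> P \<rightarrow>\<^sub>M N"
    and cl: "is_cond_law P SW W N Z K"
  shows "distr P (SW \<Otimes>\<^sub>M N) (\<lambda>\<omega>. (W \<omega>, Z \<omega>))
           = distr P SW W \<bind> (\<lambda>x. distr (K x) (SW \<Otimes>\<^sub>M N) (Pair x))"
    (is "_ = ?bind")
proof (rule measure_eqI_generator_eq[OF Int_stable_pair_measure_generator[of SW N]])
  let ?G = "{S \<times> T | S T. S \<in> sets SW \<and> T \<in> sets N}"
  show "?G \<subseteq> Pow (space SW \<times> space N)"
    using sets.space_closed[of SW] sets.space_closed[of N] by auto
  have "space SW \<noteq> {}"
    using measurable_space[OF W] prob_space.not_empty[OF P] by blast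
  then have "sets ?bind = sets (SW \<Otimes>\<^sub>M N)"
    by (subst sets_bind[where N="SW \<Otimes>\<^sub>M N"]) auto
  then show "sets (distr P (SW \<Otimes>\<^sub>M N) (\<lambda>\<omega>. (W \<omega>, Z \<omega>))) = sigma_sets (space SW \<times> space N) ?G"
    "sets ?bind = sigma_sets (space SW \<times> space N) ?G"
    by (simp_all add: sets_pair_measure)
  show "range (\<lambda>_. space SW \<times> space N) \<subseteq> ?G" "(\<Union>i. space SW \<times> space N) = space SW \<times> space N"
    by auto
  show "emeasure (distr P (SW \<Otimes>\<^sub>M N) (\<lambda>\<omega>. (W \<omega>, Z \<omega>))) (space SW \<times> space N) \<noteq> \<infinity>"
    using finite_measure.emeasure_finite[OF prob_space.finite_measure[OF P]] by (simp add: emeasure_distr)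
next
  fix R assume "R \<in> {S \<times> T | S T. S \<in> sets SW \<and> T \<in> sets N}"
  then obtain S T where R: "R = S \<times> T" and S: "S \<in> sets SW" and T: "T \<in> sets N" by auto
  have "emeasure (distr P (SW \<Otimes>\<^sub>M N) (\<lambda>\<omega>. (W \<omega>, Z \<omega>))) R = emeasure P {\<omega>\<in>space P. W \<omega> \<in> S \<and> Z \<omega> \<in> T}"
    using S T R by (subst emeasure_distr) (auto intro!: arg_cong[where f="emeasure P"])
  then show "emeasure (distr P (SW \<Otimes>\<^sub>M N) (\<lambda>\<omega>. (W \<omega>, Z \<omega>))) R = emeasure ?bind R"
    unfolding R emeasure_bind_cond_law_times[OF P W cl S T] .
qed

lemma nn_integral_cond_law:
  fixes g :: "'b \<times> 'y \<Rightarrow> ennreal"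
  assumes P: "prob_space P"
    and W[measurable]: "W \<in> P \<rightarrow>\<^sub>M SW" and Z[measurable]: "Z \<in> P \<rightarrow>\<^sub>M N"
    and cl: "is_cond_law P SW W N Z K"
    and g[measurable]: "g \<in> borel_measurable (SW \<Otimes>\<^sub>M N)"
  shows "(\<integral>\<^sup>+\<omega>. g (W \<omega>, Z \<omega>) \<partial>P) = (\<integral>\<^sup>+x. \<integral>\<^sup>+y. g (x, y) \<partial>K x \<partial>distr P SW W)"
proof -
  have Pair_x: "Pair x \<in> K x \<rightarrow>\<^sub>M SW \<Otimes>\<^sub>M N" if "x \<in> space SW" for x
    using measurable_Pair1'[OF that] is_cond_lawD(3)[OF cl that]
    by (simp add: measurable_cong_sets[of "K x" N])
  have "(\<integral>\<^sup>+\<omega>. g (W \<omega>, Z \<omega>) \<partial>P) = (\<integral>\<^sup>+p. g p \<partial>distr P (SW \<Otimes>\<^sub>M N) (\<lambda>\<omega>. (W \<omega>, Z \<omega>)))"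
    by (subst nn_integral_distr) auto
  also have "\<dots> = (\<integral>\<^sup>+x. \<integral>\<^sup>+p. g p \<partial>distr (K x) (SW \<Otimes>\<^sub>M N) (Pair x) \<partial>distr P SW W)"
    unfolding distr_pair_eq_bind_cond_law[OF P W Z cl]
    using measurable_distr_Pair_kernel[OF is_cond_lawD(1)[OF cl]]
    by (intro nn_integral_bind[OF g]) simp
  also have "\<dots> = (\<integral>\<^sup>+x. \<integral>\<^sup>+y. g (x, y) \<partial>K x \<partial>distr P SW W)"
    by (intro nn_integral_cong) (simp add: nn_integral_distr Pair_x)
  finally show ?thesis .
qed

lemma integral_cond_law:
  fixes f :: "'b \<Rightarrow> 'y \<Rightarrow> real"
  assumes P: "prob_space P"
    and W[measurable]: "W \<in> P \<rightarrow>\<^sub>M SW" and Z[measurable]: "Z \<in> P \<rightarrow>\<^sub>M N"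
    and cl: "is_cond_law P SW W N Z K"
    and f[measurable]: "(\<lambda>(x, y). f x y) \<in> borel_measurable (SW \<Otimes>\<^sub>M N)"
    and int: "integrable P (\<lambda>\<omega>. f (W \<omega>) (Z \<omega>))"
  shows "integrable (distr P SW W) (\<lambda>x. \<integral>y. f x y \<partial>K x)"
    and "(\<integral>\<omega>. f (W \<omega>) (Z \<omega>) \<partial>P) = (\<integral>x. \<integral>y. f x y \<partial>K x \<partial>distr P SW W)"
proof -
  have K: "K \<in> distr P SW W \<rightarrow>\<^sub>M subprob_algebra N"
    using is_cond_lawD(1)[OF cl] by simp
  have f': "(\<lambda>(x, y). f x y) \<in> borel_measurable (distr P SW W \<Otimes>\<^sub>M N)"
    using f by (simp add: measurable_cong_sets[OF sets_pair_measure_cong[of "distr P SW W" SW N N] refl])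
  have nn: "(\<integral>\<^sup>+\<omega>. h (f (W \<omega>) (Z \<omega>)) \<partial>P) = (\<integral>\<^sup>+x. \<integral>\<^sup>+y. h (f x y) \<partial>K x \<partial>distr P SW W)"
    if [measurable]: "h \<in> borel_measurable borel" for h :: "real \<Rightarrow> ennreal"
    using nn_integral_cond_law[OF P W Z cl, of "\<lambda>(x, y). h (f x y)"] by simp
  have "(\<integral>\<^sup>+x. \<integral>\<^sup>+y. ennreal \<bar>f x y\<bar> \<partial>K x \<partial>distr P SW W) < \<infinity>"
    using nn[of "\<lambda>r. ennreal \<bar>r\<bar>"] int by (simp add: integrable_iff_bounded)
  note parts = integral_kernel_eq_nn_integral_parts[OF K f' this]
  show "integrable (distr P SW W) (\<lambda>x. \<integral>y. f x y \<partial>K x)" by (rule parts(1))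
  show "(\<integral>\<omega>. f (W \<omega>) (Z \<omega>) \<partial>P) = (\<integral>x. \<integral>y. f x y \<partial>K x \<partial>distr P SW W)"
    unfolding parts(2) real_lebesgue_integral_def[OF int]
    using nn[of "\<lambda>r. ennreal r"] nn[of "\<lambda>r. ennreal (- r)"] by simp
qed

lemma integral_cond_law_marginal:
  fixes f :: "'y \<Rightarrow> real"
  assumes P: "prob_space P"
    and W: "W \<in> P \<rightarrow>\<^sub>M SW" and Z: "Z \<in> P \<rightarrow>\<^sub>M N"
    and cl: "is_cond_law P SW W N Z K"
    and f: "f \<in> borel_measurable N" and int: "integrable (distr P N Z) f"
  shows "integrable (distr P SW W) (\<lambda>x. \<integral>y. f y \<partial>K x)"
    and "(\<integral>x. \<integral>y. f y \<partial>K x \<partial>distr P SW W) = (\<integral>y. f y \<partial>distr P N Z)"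
proof -
  have "(\<lambda>(x, y). f y) \<in> borel_measurable (SW \<Otimes>\<^sub>M N)"
    using measurable_compose[OF measurable_snd f] by (simp add: split_beta')
  moreover have "integrable P (\<lambda>\<omega>. f (Z \<omega>))"
    using int Z f by (simp add: integrable_distr_eq)
  ultimately show "integrable (distr P SW W) (\<lambda>x. \<integral>y. f y \<partial>K x)"
    and "(\<integral>x. \<integral>y. f y \<partial>K x \<partial>distr P SW W) = (\<integral>y. f y \<partial>distr P N Z)"
    using integral_cond_law[where f="\<lambda>x. f", OF P W Z cl] Z f by (auto simp: integral_distr)
qed

section \<open>The terms of the expected MMD\<close>

lemma integrable_cond_law_pd_kernel:
  fixes k :: "'y \<Rightarrow> 'y \<Rightarrow> real"
  assumes P: "prob_space P"
    and W: "W \<in> P \<rightarrow>\<^sub>M SW" and Z: "Z \<in> P \<rightarrow>\<^sub>M N"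
    and cl: "is_cond_law P SW W N Z K"
    and pd: "pd_kernel N k" and k: "case_prod k \<in> borel_measurable (N \<Otimes>\<^sub>M N)"
    and K_int: "\<forall>x\<in>space SW. integrable (K x) (\<lambda>y. k y y)"
    and Z_int: "integrable P (\<lambda>\<omega>. k (Z \<omega>) (Z \<omega>))"
  shows "integrable P (\<lambda>\<omega>. \<integral>y. k y (Z \<omega>) \<partial>K (W \<omega>))"
proof (rule Bochner_Integration.integrable_bound)
  define m where "m x = (\<integral>y. k y y \<partial>K x)" for x
  have diag: "(\<lambda>(x, y). k y y) \<in> borel_measurable (SW \<Otimes>\<^sub>M N)"
    using measurable_compose[OF measurable_Pair[OF measurable_snd measurable_snd] k] by (simp add: split_beta')
  then have "integrable (distr P SW W) m"
    unfolding m_def using integral_cond_law(1)[OF P W Z cl _ Z_int] by simp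
  moreover have "m \<in> borel_measurable SW"
    unfolding m_def using borel_measurable_integral_kernel[OF diag is_cond_lawD(1)[OF cl]] .
  ultimately show "integrable P (\<lambda>\<omega>. (m (W \<omega>) + k (Z \<omega>) (Z \<omega>)) / 2)"
    using Z_int W by (simp add: integrable_distr_eq)
  show "(\<lambda>\<omega>. \<integral>y. k y (Z \<omega>) \<partial>K (W \<omega>)) \<in> borel_measurable P"
    using measurable_compose[OF measurable_Pair[OF W Z] borel_measurable_integral_kernel_param[OF is_cond_lawD(1)[OF cl] k]]
    by simp
  show "AE \<omega> in P. norm (\<integral>y. k y (Z \<omega>) \<partial>K (W \<omega>)) \<le> norm ((m (W \<omega>) + k (Z \<omega>) (Z \<omega>)) / 2)"
  proof (rule AE_I2)
    fix \<omega> assume "\<omega> \<in> space P"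
    then have x: "W \<omega> \<in> space SW" and z: "Z \<omega> \<in> space N"
      using W Z by (auto dest: measurable_space)
    have "\<bar>\<integral>y. k y (Z \<omega>) \<partial>K (W \<omega>)\<bar> \<le> (m (W \<omega>) + k (Z \<omega>) (Z \<omega>)) / 2"
      unfolding m_def using x z K_int is_cond_lawD(2,3)[OF cl x]
      by (intro abs_integral_pd_kernel_le[OF pd k]) auto
    then show "norm (\<integral>y. k y (Z \<omega>) \<partial>K (W \<omega>)) \<le> norm ((m (W \<omega>) + k (Z \<omega>) (Z \<omega>)) / 2)"
      by simp
  qed
qed

lemma integral_kernel_square_cond_law:
  fixes k :: "'y \<Rightarrow> 'y \<Rightarrow> real"
  assumes P: "prob_space P"
    and W: "W \<in> P \<rightarrow>\<^sub>M SW" and Z: "Z \<in> P \<rightarrow>\<^sub>M N"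
    and cl: "is_cond_law P SW W N Z K"
    and pd: "pd_kernel N k" and k: "case_prod k \<in> borel_measurable (N \<Otimes>\<^sub>M N)"
    and K_int: "\<forall>x\<in>space SW. integrable (K x) (\<lambda>y. k y y)"
    and Z_int: "integrable P (\<lambda>\<omega>. k (Z \<omega>) (Z \<omega>))"
  shows "integrable (distr P SW W) (\<lambda>x. \<integral>z. case_prod k z \<partial>(K x \<Otimes>\<^sub>M K x))"
    and "(\<integral>x. \<integral>z. case_prod k z \<partial>(K x \<Otimes>\<^sub>M K x) \<partial>distr P SW W)
           = (\<integral>\<omega>. \<integral>y. k y (Z \<omega>) \<partial>K (W \<omega>) \<partial>P)"
proof -
  have Fubini: "(\<integral>z. case_prod k z \<partial>(K x \<Otimes>\<^sub>M K x)) = (\<integral>z. \<integral>y. k y z \<partial>K x \<partial>K x)"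
    if x: "x \<in> space (distr P SW W)" for x
    using integral_pd_kernel_Fubini(2)[OF pd k _ _ _ measurable_ident_sets, of "K x" "K x"]
      is_cond_lawD(2,3)[OF cl] K_int x by simp
  note cond_law = integral_cond_law[OF P W Z cl
      borel_measurable_integral_kernel_param[OF is_cond_lawD(1)[OF cl] k]
      integrable_cond_law_pd_kernel[OF P W Z cl pd k K_int Z_int]]
  show "integrable (distr P SW W) (\<lambda>x. \<integral>z. case_prod k z \<partial>(K x \<Otimes>\<^sub>M K x))"
    using cond_law(1) by (rule Bochner_Integration.integrable_cong[THEN iffD1, OF refl, rotated])
      (simp add: Fubini)
  show "(\<integral>x. \<integral>z. case_prod k z \<partial>(K x \<Otimes>\<^sub>M K x) \<partial>distr P SW W)
           = (\<integral>\<omega>. \<integral>y. k y (Z \<omega>) \<partial>K (W \<omega>) \<partial>P)"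
    unfolding cond_law(2) by (intro Bochner_Integration.integral_cong) (simp_all add: Fubini)
qed

lemma integral_kernel_cross_cond_law:
  fixes k :: "'y \<Rightarrow> 'y \<Rightarrow> real"
  assumes P: "prob_space P"
    and W: "W \<in> P \<rightarrow>\<^sub>M SW" and Z: "Z \<in> P \<rightarrow>\<^sub>M N"
    and cl: "is_cond_law P SW W N Z K"
    and pd: "pd_kernel N k" and k: "case_prod k \<in> borel_measurable (N \<Otimes>\<^sub>M N)"
    and K_int: "\<forall>x\<in>space SW. integrable (K x) (\<lambda>y. k y y)"
    and Z_int: "integrable P (\<lambda>\<omega>. k (Z \<omega>) (Z \<omega>))"
  shows "integrable (distr P SW W) (\<lambda>x. \<integral>z. case_prod k z \<partial>(distr P N Z \<Otimes>\<^sub>M K x))"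
    and "(\<integral>x. \<integral>z. case_prod k z \<partial>(distr P N Z \<Otimes>\<^sub>M K x) \<partial>distr P SW W)
           = (\<integral>z. case_prod k z \<partial>(distr P N Z \<Otimes>\<^sub>M distr P N Z))" (is ?integral)
proof -
  define PZ where "PZ = distr P N Z"
  define \<phi> where "\<phi> = (\<lambda>z. \<integral>y. k y z \<partial>PZ)"
  have PZ: "prob_space PZ" "sets PZ = sets N"
    unfolding PZ_def using P Z by (simp_all add: prob_space.prob_space_distr)
  have PZ_int: "integrable PZ (\<lambda>y. k y y)"
    unfolding PZ_def using Z Z_int measurable_compose[OF measurable_Pair[OF measurable_id measurable_id] k]
    by (subst integrable_distr_eq) auto
  have Fubini: "(\<integral>z. case_prod k z \<partial>(PZ \<Otimes>\<^sub>M Q)) = (\<integral>z. \<phi> z \<partial>Q)"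
    and integrable_\<phi>: "integrable Q \<phi>"
    if Q: "prob_space Q" "sets Q = sets N" "integrable Q (\<lambda>y. k y y)" for Q
    using integral_pd_kernel_Fubini(1,2)[OF pd k PZ Q(1) measurable_ident_sets[OF Q(2)] PZ_int] Q(3)
    by (simp_all add: \<phi>_def)
  have Fubini_K: "(\<integral>z. case_prod k z \<partial>(PZ \<Otimes>\<^sub>M K x)) = (\<integral>z. \<phi> z \<partial>K x)" if "x \<in> space SW" for x
    using Fubini is_cond_lawD(2,3)[OF cl that] K_int that by simp
  have "(\<lambda>(z, y). k y z) \<in> borel_measurable (N \<Otimes>\<^sub>M N)"
    using measurable_compose[OF measurable_Pair[OF measurable_snd measurable_fst] k] by (simp add: split_beta')
  moreover have "(\<lambda>_. PZ) \<in> N \<rightarrow>\<^sub>M subprob_algebra N"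
    using PZ by (intro measurable_const) (simp add: space_subprob_algebra prob_space_imp_subprob_space)
  ultimately have "\<phi> \<in> borel_measurable N"
    unfolding \<phi>_def by (rule borel_measurable_integral_kernel)
  note marginal = integral_cond_law_marginal[OF P W Z cl this integrable_\<phi>[OF PZ PZ_int, unfolded PZ_def]]
  show "integrable (distr P SW W) (\<lambda>x. \<integral>z. case_prod k z \<partial>(distr P N Z \<Otimes>\<^sub>M K x))"
    using marginal(1) unfolding PZ_def[symmetric]
    by (rule Bochner_Integration.integrable_cong[THEN iffD1, OF refl, rotated]) (simp add: Fubini_K)
  have "(\<integral>x. \<integral>z. case_prod k z \<partial>(PZ \<Otimes>\<^sub>M K x) \<partial>distr P SW W) = (\<integral>x. \<integral>z. \<phi> z \<partial>K x \<partial>distr P SW W)"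
    by (intro Bochner_Integration.integral_cong) (simp_all add: Fubini_K)
  also have "\<dots> = (\<integral>z. case_prod k z \<partial>(PZ \<Otimes>\<^sub>M PZ))"
    unfolding marginal(2) PZ_def[symmetric] by (rule Fubini[OF PZ PZ_int, symmetric])
  finally show ?integral
    unfolding PZ_def .
qed

lemma AE_integral_kernel_resample_swap:
  fixes k :: "'y \<Rightarrow> 'y \<Rightarrow> real" and g :: "'b \<times> 'c \<Rightarrow> 'y"
  assumes P: "prob_space P"
    and W: "W \<in> P \<rightarrow>\<^sub>M SW" and V: "V \<in> P \<rightarrow>\<^sub>M SV" and g: "g \<in> SW \<Otimes>\<^sub>M SV \<rightarrow>\<^sub>M N"
    and indep: "distr P (SW \<Otimes>\<^sub>M SV) (\<lambda>\<omega>. (W \<omega>, V \<omega>)) = distr P SW W \<Otimes>\<^sub>M distr P SV V"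
    and Z: "\<And>\<omega>. \<omega> \<in> space P \<Longrightarrow> Z \<omega> = g (W \<omega>, V \<omega>)"
    and cl: "is_cond_law P SW W N Z K"
    and pd: "pd_kernel N k" and k: "case_prod k \<in> borel_measurable (N \<Otimes>\<^sub>M N)"
    and K_int: "\<forall>x\<in>space SW. integrable (K x) (\<lambda>y. k y y)"
    and Z_int: "integrable P (\<lambda>\<omega>. k (Z \<omega>) (Z \<omega>))"
  shows "AE x in distr P SW W. (\<integral>v. \<integral>y. k y (g (x, v)) \<partial>K x \<partial>distr P SV V)
                               = (\<integral>y. \<integral>v. k y (g (x, v)) \<partial>distr P SV V \<partial>K x)"
proof -
  interpret prob_space P by (rule P)
  have \<nu>: "prob_space (distr P SV V)" "sets (distr P SV V) = sets SV"
    using V by (simp_all add: prob_space_distr)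
  have "(\<lambda>(x, v). k (g (x, v)) (g (x, v))) \<in> borel_measurable (SW \<Otimes>\<^sub>M SV)"
    using measurable_compose[OF measurable_Pair[OF g g] k] by (simp add: split_beta')
  moreover have "integrable P (\<lambda>\<omega>. k (g (W \<omega>, V \<omega>)) (g (W \<omega>, V \<omega>)))"
    using Z_int by (rule Bochner_Integration.integrable_cong[THEN iffD1, OF refl, rotated]) (simp add: Z)
  ultimately have "AE x in distr P SW W. integrable (distr P SV V) (\<lambda>v. k (g (x, v)) (g (x, v)))"
    using integral_independent_pair(1)[OF W V indep, of "\<lambda>x v. k (g (x, v)) (g (x, v))"] by auto
  with AE_space show ?thesis
  proof eventually_elim
    case (elim x)
    then have x: "x \<in> space SW" by simp
    have gx: "(\<lambda>v. g (x, v)) \<in> distr P SV V \<rightarrow>\<^sub>M N"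
      using measurable_compose[OF measurable_Pair1'[OF x] g] by simp
    show ?case
      using integral_pd_kernel_Fubini(3)[OF pd k is_cond_lawD(2,3)[OF cl x] \<nu>(1) gx] K_int x elim
      by simp
  qed
qed

text \<open>A Fubini swap under the average over W: on the left, y is integrated against K_W inside and
  v against the law of V outside, the latter realised through Z = g (W, V) since V is independent of W.\<close>

lemma integral_cond_law_exchange:
  fixes k :: "'y \<Rightarrow> 'y \<Rightarrow> real" and g :: "'b \<times> 'c \<Rightarrow> 'y"
  assumes P: "prob_space P"
    and W: "W \<in> P \<rightarrow>\<^sub>M SW" and V: "V \<in> P \<rightarrow>\<^sub>M SV" and g: "g \<in> SW \<Otimes>\<^sub>M SV \<rightarrow>\<^sub>M N"
    and indep: "distr P (SW \<Otimes>\<^sub>M SV) (\<lambda>\<omega>. (W \<omega>, V \<omega>)) = distr P SW W \<Otimes>\<^sub>M distr P SV V"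
    and Z: "\<And>\<omega>. \<omega> \<in> space P \<Longrightarrow> Z \<omega> = g (W \<omega>, V \<omega>)"
    and cl: "is_cond_law P SW W N Z K"
    and pd: "pd_kernel N k" and k: "case_prod k \<in> borel_measurable (N \<Otimes>\<^sub>M N)"
    and K_int: "\<forall>x\<in>space SW. integrable (K x) (\<lambda>y. k y y)"
    and Z_int: "integrable P (\<lambda>\<omega>. k (Z \<omega>) (Z \<omega>))"
  shows "(\<integral>\<omega>. \<integral>y. k y (Z \<omega>) \<partial>K (W \<omega>) \<partial>P)
           = (\<integral>x. \<integral>y. \<integral>v. k y (g (x, v)) \<partial>distr P SV V \<partial>K x \<partial>distr P SW W)"
proof -
  interpret prob_space P by (rule P)
  define \<psi> where "\<psi> x z = (\<integral>y. k y z \<partial>K x)" for x z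
  have Z_meas: "Z \<in> P \<rightarrow>\<^sub>M N"
    using measurable_compose[OF measurable_Pair[OF W V] g] by (rule measurable_cong[THEN iffD1, rotated]) (simp add: Z)
  have "(\<lambda>(x, v). \<psi> x (g (x, v))) \<in> borel_measurable (SW \<Otimes>\<^sub>M SV)"
    using measurable_compose[OF measurable_Pair[OF measurable_fst g]
        borel_measurable_integral_kernel_param[OF is_cond_lawD(1)[OF cl] k]]
    by (simp add: \<psi>_def split_beta')
  moreover have "integrable P (\<lambda>\<omega>. \<psi> (W \<omega>) (g (W \<omega>, V \<omega>)))"
    using integrable_cond_law_pd_kernel[OF P W Z_meas cl pd k K_int Z_int]
    by (rule Bochner_Integration.integrable_cong[THEN iffD1, OF refl, rotated]) (simp add: \<psi>_def Z)
  ultimately have \<psi>_int: "integrable (distr P SW W) (\<lambda>x. \<integral>v. \<psi> x (g (x, v)) \<partial>distr P SV V)"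
    and \<psi>_eq: "(\<integral>\<omega>. \<psi> (W \<omega>) (g (W \<omega>, V \<omega>)) \<partial>P)
                 = (\<integral>x. \<integral>v. \<psi> x (g (x, v)) \<partial>distr P SV V \<partial>distr P SW W)"
    using integral_independent_pair[OF W V indep, of "\<lambda>x v. \<psi> x (g (x, v))"] by auto
  have "(\<lambda>x. \<integral>y. \<integral>v. k y (g (x, v)) \<partial>distr P SV V \<partial>K x) \<in> borel_measurable (distr P SW W)"
    using borel_measurable_integral_kernel[OF borel_measurable_integral_resample[OF _ _ g k]
        is_cond_lawD(1)[OF cl]] V
    by (simp add: prob_space_distr)
  then have "(\<integral>x. \<integral>v. \<psi> x (g (x, v)) \<partial>distr P SV V \<partial>distr P SW W)
      = (\<integral>x. \<integral>y. \<integral>v. k y (g (x, v)) \<partial>distr P SV V \<partial>K x \<partial>distr P SW W)"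
    using \<psi>_int AE_integral_kernel_resample_swap[OF P W V g indep Z cl pd k K_int Z_int]
    by (intro integral_cong_AE) (auto simp: \<psi>_def)
  moreover have "(\<integral>\<omega>. \<integral>y. k y (Z \<omega>) \<partial>K (W \<omega>) \<partial>P) = (\<integral>\<omega>. \<psi> (W \<omega>) (g (W \<omega>, V \<omega>)) \<partial>P)"
    by (intro Bochner_Integration.integral_cong) (simp_all add: \<psi>_def Z)
  ultimately show ?thesis
    using \<psi>_eq by simp
qed

lemma integrable_pd_kernel_resample:
  fixes k :: "'y \<Rightarrow> 'y \<Rightarrow> real" and g :: "'b \<times> 'c \<Rightarrow> 'y"
  assumes P: "prob_space P"
    and W: "W \<in> P \<rightarrow>\<^sub>M SW" and V: "V \<in> P \<rightarrow>\<^sub>M SV" and V': "V' \<in> P \<rightarrow>\<^sub>M SV"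
    and g: "g \<in> SW \<Otimes>\<^sub>M SV \<rightarrow>\<^sub>M N"
    and indep: "distr P (SW \<Otimes>\<^sub>M SV) (\<lambda>\<omega>. (W \<omega>, V \<omega>)) = distr P SW W \<Otimes>\<^sub>M distr P SV V"
    and indep': "distr P ((SW \<Otimes>\<^sub>M SV) \<Otimes>\<^sub>M SV) (\<lambda>\<omega>. ((W \<omega>, V \<omega>), V' \<omega>))
                   = distr P (SW \<Otimes>\<^sub>M SV) (\<lambda>\<omega>. (W \<omega>, V \<omega>)) \<Otimes>\<^sub>M distr P SV V'"
    and V'_copy: "distr P SV V' = distr P SV V"
    and pd: "pd_kernel N k" and k: "case_prod k \<in> borel_measurable (N \<Otimes>\<^sub>M N)"
    and diag: "integrable P (\<lambda>\<omega>. k (g (W \<omega>, V \<omega>)) (g (W \<omega>, V \<omega>)))"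
  shows "integrable P (\<lambda>\<omega>. k (g (W \<omega>, V \<omega>)) (g (W \<omega>, V' \<omega>)))"
proof -
  interpret prob_space P by (rule P)
  have WV: "(\<lambda>\<omega>. (W \<omega>, V \<omega>)) \<in> P \<rightarrow>\<^sub>M SW \<Otimes>\<^sub>M SV"
    using W V by (rule measurable_Pair)
  have WV': "(\<lambda>\<omega>. (W \<omega>, V' \<omega>)) \<in> P \<rightarrow>\<^sub>M SW \<Otimes>\<^sub>M SV"
    using W V' by (rule measurable_Pair)
  have diag_meas: "(\<lambda>p. k (g p) (g p)) \<in> borel_measurable (SW \<Otimes>\<^sub>M SV)"
    using measurable_compose[OF measurable_Pair[OF g g] k] by simp
  have "distr P (SW \<Otimes>\<^sub>M SV) (\<lambda>\<omega>. (W \<omega>, V' \<omega>)) = distr P (SW \<Otimes>\<^sub>M SV) (\<lambda>\<omega>. (W \<omega>, V \<omega>))"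
    using distr_pair_compose_product[OF WV V' indep' measurable_fst measurable_ident] indep V'_copy
    by (simp add: id_def)
  then have "integrable P (\<lambda>\<omega>. k (g (W \<omega>, V' \<omega>)) (g (W \<omega>, V' \<omega>)))"
    using diag integrable_distr_eq[OF WV diag_meas] integrable_distr_eq[OF WV' diag_meas] by simp
  with diag show ?thesis
    by (rule integrable_pd_kernel[OF pd k measurable_compose[OF WV g] measurable_compose[OF WV' g]])
qed

text \<open>Integrating out V' in k (Z, g (W, V')) leaves \<integral> k Z (g (W, v)) dv, as V' is independent of
  (W, V) and distributed like V.\<close>

lemma integral_cond_law_resample:
  fixes k :: "'y \<Rightarrow> 'y \<Rightarrow> real" and g :: "'b \<times> 'c \<Rightarrow> 'y"
  assumes P: "prob_space P"
    and W: "W \<in> P \<rightarrow>\<^sub>M SW" and V: "V \<in> P \<rightarrow>\<^sub>M SV" and V': "V' \<in> P \<rightarrow>\<^sub>M SV"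
    and g: "g \<in> SW \<Otimes>\<^sub>M SV \<rightarrow>\<^sub>M N"
    and indep: "distr P (SW \<Otimes>\<^sub>M SV) (\<lambda>\<omega>. (W \<omega>, V \<omega>)) = distr P SW W \<Otimes>\<^sub>M distr P SV V"
    and indep': "distr P ((SW \<Otimes>\<^sub>M SV) \<Otimes>\<^sub>M SV) (\<lambda>\<omega>. ((W \<omega>, V \<omega>), V' \<omega>))
                   = distr P (SW \<Otimes>\<^sub>M SV) (\<lambda>\<omega>. (W \<omega>, V \<omega>)) \<Otimes>\<^sub>M distr P SV V'"
    and V'_copy: "distr P SV V' = distr P SV V"
    and Z: "\<And>\<omega>. \<omega> \<in> space P \<Longrightarrow> Z \<omega> = g (W \<omega>, V \<omega>)"
    and cl: "is_cond_law P SW W N Z K"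
    and pd: "pd_kernel N k" and k: "case_prod k \<in> borel_measurable (N \<Otimes>\<^sub>M N)"
    and Z_int: "integrable P (\<lambda>\<omega>. k (Z \<omega>) (Z \<omega>))"
  shows "(\<integral>x. \<integral>y. \<integral>v. k y (g (x, v)) \<partial>distr P SV V \<partial>K x \<partial>distr P SW W)
           = (\<integral>\<omega>. k (Z \<omega>) (g (W \<omega>, V' \<omega>)) \<partial>P)"
proof -
  interpret prob_space P by (rule P)
  have WV: "(\<lambda>\<omega>. (W \<omega>, V \<omega>)) \<in> P \<rightarrow>\<^sub>M SW \<Otimes>\<^sub>M SV"
    using W V by (rule measurable_Pair)
  have Z_meas: "Z \<in> P \<rightarrow>\<^sub>M N"
    using measurable_compose[OF WV g] by (rule measurable_cong[THEN iffD1, rotated]) (simp add: Z)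
  have "integrable P (\<lambda>\<omega>. k (g (W \<omega>, V \<omega>)) (g (W \<omega>, V \<omega>)))"
    using Z_int by (rule Bochner_Integration.integrable_cong[THEN iffD1, OF refl, rotated]) (simp add: Z)
  then have "integrable P (\<lambda>\<omega>. k (g (W \<omega>, V \<omega>)) (g (W \<omega>, V' \<omega>)))"
    by (rule integrable_pd_kernel_resample[OF P W V V' g indep indep' V'_copy pd k])
  moreover have "(\<lambda>(p, v). k (g p) (g (fst p, v))) \<in> borel_measurable ((SW \<Otimes>\<^sub>M SV) \<Otimes>\<^sub>M SV)"
    using g k by measurable
  ultimately have resample:
    "integrable (distr P (SW \<Otimes>\<^sub>M SV) (\<lambda>\<omega>. (W \<omega>, V \<omega>))) (\<lambda>p. \<integral>v. k (g p) (g (fst p, v)) \<partial>distr P SV V)"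
    "(\<integral>\<omega>. k (g (W \<omega>, V \<omega>)) (g (W \<omega>, V' \<omega>)) \<partial>P)
       = (\<integral>p. \<integral>v. k (g p) (g (fst p, v)) \<partial>distr P SV V \<partial>distr P (SW \<Otimes>\<^sub>M SV) (\<lambda>\<omega>. (W \<omega>, V \<omega>)))"
    using integral_independent_pair(2,3)[OF WV V' indep', of "\<lambda>p v. k (g p) (g (fst p, v))"]
    unfolding V'_copy by auto
  define h where "h x y = (\<integral>v. k y (g (x, v)) \<partial>distr P SV V)" for x y
  have h_meas: "(\<lambda>(x, y). h x y) \<in> borel_measurable (SW \<Otimes>\<^sub>M N)"
    unfolding h_def using V by (intro borel_measurable_integral_resample[OF _ _ g k]) (simp_all add: prob_space_distr)
  have H_meas: "(\<lambda>p. h (fst p) (g p)) \<in> borel_measurable (SW \<Otimes>\<^sub>M SV)"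
    using measurable_compose[OF measurable_Pair[OF measurable_fst g] h_meas] by simp
  have h_WZ: "h (W \<omega>) (Z \<omega>) = h (fst (W \<omega>, V \<omega>)) (g (W \<omega>, V \<omega>))" if "\<omega> \<in> space P" for \<omega>
    using that by (simp add: Z)
  have "integrable P (\<lambda>\<omega>. h (fst (W \<omega>, V \<omega>)) (g (W \<omega>, V \<omega>)))"
    using resample(1) integrable_distr_eq[OF WV H_meas] by (simp add: h_def)
  then have h_int: "integrable P (\<lambda>\<omega>. h (W \<omega>) (Z \<omega>))"
    by (rule Bochner_Integration.integrable_cong[THEN iffD1, OF refl, rotated]) (simp add: h_WZ)
  have "(\<integral>x. \<integral>y. h x y \<partial>K x \<partial>distr P SW W) = (\<integral>\<omega>. h (W \<omega>) (Z \<omega>) \<partial>P)"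
    using integral_cond_law(2)[OF P W Z_meas cl h_meas h_int] by simp
  also have "\<dots> = (\<integral>\<omega>. h (fst (W \<omega>, V \<omega>)) (g (W \<omega>, V \<omega>)) \<partial>P)"
    by (intro Bochner_Integration.integral_cong) (simp_all add: h_WZ)
  also have "\<dots> = (\<integral>\<omega>. k (g (W \<omega>, V \<omega>)) (g (W \<omega>, V' \<omega>)) \<partial>P)"
    using resample(2) integral_distr[OF WV H_meas] by (simp add: h_def)
  also have "\<dots> = (\<integral>\<omega>. k (Z \<omega>) (g (W \<omega>, V' \<omega>)) \<partial>P)"
    by (intro Bochner_Integration.integral_cong) (simp_all add: Z)
  finally show ?thesis
    unfolding h_def .
qed

lemma integral_kernel_square_cond_law_resample:
  fixes k :: "'y \<Rightarrow> 'y \<Rightarrow> real" and g :: "'b \<times> 'c \<Rightarrow> 'y"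
  assumes P: "prob_space P"
    and W: "W \<in> P \<rightarrow>\<^sub>M SW" and V: "V \<in> P \<rightarrow>\<^sub>M SV" and V': "V' \<in> P \<rightarrow>\<^sub>M SV"
    and g: "g \<in> SW \<Otimes>\<^sub>M SV \<rightarrow>\<^sub>M N"
    and indep: "distr P (SW \<Otimes>\<^sub>M SV) (\<lambda>\<omega>. (W \<omega>, V \<omega>)) = distr P SW W \<Otimes>\<^sub>M distr P SV V"
    and indep': "distr P ((SW \<Otimes>\<^sub>M SV) \<Otimes>\<^sub>M SV) (\<lambda>\<omega>. ((W \<omega>, V \<omega>), V' \<omega>))
                   = distr P (SW \<Otimes>\<^sub>M SV) (\<lambda>\<omega>. (W \<omega>, V \<omega>)) \<Otimes>\<^sub>M distr P SV V'"
    and V'_copy: "distr P SV V' = distr P SV V"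
    and Z: "\<And>\<omega>. \<omega> \<in> space P \<Longrightarrow> Z \<omega> = g (W \<omega>, V \<omega>)"
    and cl: "is_cond_law P SW W N Z K"
    and pd: "pd_kernel N k" and k: "case_prod k \<in> borel_measurable (N \<Otimes>\<^sub>M N)"
    and K_int: "\<forall>x\<in>space SW. integrable (K x) (\<lambda>y. k y y)"
    and Z_int: "integrable P (\<lambda>\<omega>. k (Z \<omega>) (Z \<omega>))"
  shows "(\<integral>x. \<integral>z. case_prod k z \<partial>(K x \<Otimes>\<^sub>M K x) \<partial>distr P SW W)
           = (\<integral>\<omega>. k (Z \<omega>) (g (W \<omega>, V' \<omega>)) \<partial>P)"
proof -
  have Z_meas: "Z \<in> P \<rightarrow>\<^sub>M N"
    using measurable_compose[OF measurable_Pair[OF W V] g]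
    by (rule measurable_cong[THEN iffD1, rotated]) (simp add: Z)
  show ?thesis
    using integral_kernel_square_cond_law(2)[OF P W Z_meas cl pd k K_int Z_int]
      integral_cond_law_exchange[OF P W V g indep Z cl pd k K_int Z_int]
      integral_cond_law_resample[OF P W V V' g indep indep' V'_copy Z cl pd k Z_int]
    by simp
qed

lemma integral_MMD2_cond_law:
  fixes k :: "'y \<Rightarrow> 'y \<Rightarrow> real"
  assumes P: "prob_space P"
    and W: "W \<in> P \<rightarrow>\<^sub>M SW" and Z: "Z \<in> P \<rightarrow>\<^sub>M N"
    and cl: "is_cond_law P SW W N Z K"
    and pd: "pd_kernel N k" and k: "case_prod k \<in> borel_measurable (N \<Otimes>\<^sub>M N)"
    and K_int: "\<forall>x\<in>space SW. integrable (K x) (\<lambda>y. k y y)"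
    and Z_int: "integrable P (\<lambda>\<omega>. k (Z \<omega>) (Z \<omega>))"
  shows "(\<integral>x. MMD2 k (distr P N Z) (K x) \<partial>distr P SW W)
           = (\<integral>x. \<integral>z. case_prod k z \<partial>(K x \<Otimes>\<^sub>M K x) \<partial>distr P SW W)
             - (\<integral>z. case_prod k z \<partial>(distr P N Z \<Otimes>\<^sub>M distr P N Z))"
proof -
  define \<mu> where "\<mu> = distr P SW W"
  define c where "c = (\<integral>z. case_prod k z \<partial>(distr P N Z \<Otimes>\<^sub>M distr P N Z))"
  define cross where "cross x = (\<integral>z. case_prod k z \<partial>(distr P N Z \<Otimes>\<^sub>M K x))" for x
  define square where "square x = (\<integral>z. case_prod k z \<partial>(K x \<Otimes>\<^sub>M K x))" for x
  interpret \<mu>: prob_space \<mu>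
    unfolding \<mu>_def using P W by (simp add: prob_space.prob_space_distr)
  note cross_law = integral_kernel_cross_cond_law[OF P W Z cl pd k K_int Z_int, folded \<mu>_def cross_def c_def]
  note square_law = integral_kernel_square_cond_law[OF P W Z cl pd k K_int Z_int, folded \<mu>_def square_def]
  have "(\<integral>x. MMD2 k (distr P N Z) (K x) \<partial>\<mu>) = (\<integral>x. c - 2 * cross x + square x \<partial>\<mu>)"
    by (simp add: MMD2_def c_def cross_def square_def)
  also have "\<dots> = c - 2 * (\<integral>x. cross x \<partial>\<mu>) + (\<integral>x. square x \<partial>\<mu>)"
    using cross_law(1) square_law(1) by (simp add: \<mu>.prob_space)
  also have "\<dots> = (\<integral>x. square x \<partial>\<mu>) - c"
    using cross_law(2) by simp
  finally show ?thesis
    unfolding \<mu>_def c_def square_def .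
qed

section \<open>Pick-freeze vectors\<close>

lemma (in prob_space) integral_indep_copy:
  fixes h :: "'n \<times> 'n \<Rightarrow> real"
  assumes indep: "indep_var S X S X'" and copy: "distr M S X' = distr M S X"
    and f: "f \<in> S \<rightarrow>\<^sub>M N" and h: "h \<in> borel_measurable (N \<Otimes>\<^sub>M N)"
  shows "(\<integral>z. h z \<partial>(distr M N (\<lambda>\<omega>. f (X \<omega>)) \<Otimes>\<^sub>M distr M N (\<lambda>\<omega>. f (X \<omega>))))
           = (\<integral>\<omega>. h (f (X \<omega>), f (X' \<omega>)) \<partial>M)"
proof -
  have X: "random_variable S X" and X': "random_variable S X'"
    using indep by (simp_all add: indep_var_distribution_eq)
  have "distr M N (\<lambda>\<omega>. f (X' \<omega>)) = distr M N (\<lambda>\<omega>. f (X \<omega>))"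
    using distr_distr[OF f X'] distr_distr[OF f X] unfolding copy by (simp add: comp_def)
  with distr_pair_compose_product[OF X X' _ f f] indep
  have "distr M (N \<Otimes>\<^sub>M N) (\<lambda>\<omega>. (f (X \<omega>), f (X' \<omega>)))
      = distr M N (\<lambda>\<omega>. f (X \<omega>)) \<Otimes>\<^sub>M distr M N (\<lambda>\<omega>. f (X \<omega>))"
    by (simp add: indep_var_distribution_eq)
  with integral_distr[OF measurable_Pair[OF measurable_compose[OF X f] measurable_compose[OF X' f]] h]
  show ?thesis by simp
qed

lemma merge_restrict_Diff:
  assumes "A \<subseteq> I"
  shows "merge A (I - A) (restrict x A, restrict x' (I - A)) = (\<lambda>i\<in>I. if i \<in> A then x i else x' i)"
  using assms by (auto simp: merge_def fun_eq_iff)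

lemma (in prob_space) distr_pick_freeze:
  assumes X: "random_variable (PiM I M') X" and X': "random_variable (PiM I M') X'"
    and indep_comp: "indep_vars M' (\<lambda>i \<omega>. X \<omega> i) I"
    and indep: "indep_var (PiM I M') X (PiM I M') X'"
    and copy: "distr M (PiM I M') X' = distr M (PiM I M') X"
    and A: "A \<subseteq> I"
  shows "distr M (PiM A M' \<Otimes>\<^sub>M PiM (I - A) M') (\<lambda>\<omega>. (restrict (X \<omega>) A, restrict (X \<omega>) (I - A)))
           = distr M (PiM A M') (\<lambda>\<omega>. restrict (X \<omega>) A) \<Otimes>\<^sub>M distr M (PiM (I - A) M') (\<lambda>\<omega>. restrict (X \<omega>) (I - A))"
      (is ?blocks)
    and "distr M ((PiM A M' \<Otimes>\<^sub>M PiM (I - A) M') \<Otimes>\<^sub>M PiM (I - A) M')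
             (\<lambda>\<omega>. ((restrict (X \<omega>) A, restrict (X \<omega>) (I - A)), restrict (X' \<omega>) (I - A)))
           = distr M (PiM A M' \<Otimes>\<^sub>M PiM (I - A) M') (\<lambda>\<omega>. (restrict (X \<omega>) A, restrict (X \<omega>) (I - A)))
             \<Otimes>\<^sub>M distr M (PiM (I - A) M') (\<lambda>\<omega>. restrict (X' \<omega>) (I - A))"
      (is ?fresh_block)
    and "distr M (PiM (I - A) M') (\<lambda>\<omega>. restrict (X' \<omega>) (I - A))
           = distr M (PiM (I - A) M') (\<lambda>\<omega>. restrict (X \<omega>) (I - A))"
      (is ?copy_block)
proof -
  have B: "I - A \<subseteq> I" "A \<inter> (I - A) = {}" by auto
  show ?blocks
    using indep_var_restrict[OF indep_comp B(2) A B(1)] by (simp add: indep_var_distribution_eq)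
  have "(\<lambda>x. (restrict x A, restrict x (I - A))) \<in> PiM I M' \<rightarrow>\<^sub>M PiM A M' \<Otimes>\<^sub>M PiM (I - A) M'"
    using A B by (intro measurable_Pair measurable_restrict_subset)
  from distr_pair_compose_product[OF X X' _ this measurable_restrict_subset[OF B(1)]] indep
  show ?fresh_block
    by (simp add: indep_var_distribution_eq)
  show ?copy_block
    using distr_distr[OF measurable_restrict_subset[OF B(1)] X] distr_distr[OF measurable_restrict_subset[OF B(1)] X']
    by (simp add: copy comp_def)
qed

theorem mainTheorem7:
  fixes P :: "'w measure"
    and M :: "nat \<Rightarrow> 'a measure"
    and d :: nat
    and X X' :: "'w \<Rightarrow> nat \<Rightarrow> 'a"
    and \<eta> :: "(nat \<Rightarrow> 'a) \<Rightarrow> 'y"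
    and N :: "'y measure"
    and k :: "'y \<Rightarrow> 'y \<Rightarrow> real"
    and A :: "nat set"
    and K :: "(nat \<Rightarrow> 'a) \<Rightarrow> 'y measure"
  assumes P: "prob_space P"
    and X_rv: "X \<in> measurable P (PiM {1..d} M)"
    and X'_rv: "X' \<in> measurable P (PiM {1..d} M)"
    and X_indep_comp: "prob_space.indep_vars P M (\<lambda>i \<omega>. X \<omega> i) {1..d}"
    and X_X'_indep: "prob_space.indep_var P (PiM {1..d} M) X (PiM {1..d} M) X'"
    and X'_copy: "distr P (PiM {1..d} M) X' = distr P (PiM {1..d} M) X"
    and \<eta>_meas: "\<eta> \<in> measurable (PiM {1..d} M) N"
    and k_meas: "case_prod k \<in> borel_measurable (N \<Otimes>\<^sub>M N)"
    and k_pd: "pd_kernel N k"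
    and A: "A \<subseteq> {1..d}"
    and K: "is_cond_law P (PiM A M) (\<lambda>\<omega>. restrict (X \<omega>) A) N (\<lambda>\<omega>. \<eta> (X \<omega>)) K"
    and K_int: "\<forall>x\<in>space (PiM A M). integrable (K x) (\<lambda>y. k y y)"
    and Y_int: "integrable P (\<lambda>\<omega>. k (\<eta> (X \<omega>)) (\<eta> (X \<omega>)))"
  shows "(\<integral>x. MMD2 k (distr P N (\<lambda>\<omega>. \<eta> (X \<omega>))) (K x)
              \<partial>(distr P (PiM A M) (\<lambda>\<omega>. restrict (X \<omega>) A)))
         = (\<integral>\<omega>. k (\<eta> (X \<omega>))
                   (\<eta> (\<lambda>i\<in>{1..d}. if i \<in> A then X \<omega> i else X' \<omega> i)) \<partial>P)
           - (\<integral>\<omega>. k (\<eta> (X \<omega>)) (\<eta> (X' \<omega>)) \<partial>P)"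
proof -
  interpret prob_space P by (rule P)
  define g where "g p = \<eta> (merge A ({1..d} - A) p)" for p
  have "\<eta> \<in> PiM (A \<union> ({1..d} - A)) M \<rightarrow>\<^sub>M N"
    using \<eta>_meas A by (simp add: Un_absorb1)
  then have g: "g \<in> PiM A M \<Otimes>\<^sub>M PiM ({1..d} - A) M \<rightarrow>\<^sub>M N"
    unfolding g_def by (rule measurable_compose[OF measurable_merge])
  have pick_freeze: "\<eta> (\<lambda>i\<in>{1..d}. if i \<in> A then x i else x' i) = g (restrict x A, restrict x' ({1..d} - A))"
    for x x'
    unfolding g_def merge_restrict_Diff[OF A] ..
  have Y: "\<eta> (X \<omega>) = g (restrict (X \<omega>) A, restrict (X \<omega>) ({1..d} - A))" if "\<omega> \<in> space P" for \<omega>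
    using pick_freeze[of "X \<omega>" "X \<omega>"] measurable_space[OF X_rv that] by (simp add: space_PiM)
  have restrict_rv: "(\<lambda>\<omega>. restrict (Z \<omega>) C) \<in> P \<rightarrow>\<^sub>M PiM C M"
    if "Z \<in> P \<rightarrow>\<^sub>M PiM {1..d} M" "C \<subseteq> {1..d}" for Z C
    using measurable_compose[OF that(1) measurable_restrict_subset[OF that(2)]] .
  have "(\<integral>x. MMD2 k (distr P N (\<lambda>\<omega>. \<eta> (X \<omega>))) (K x) \<partial>distr P (PiM A M) (\<lambda>\<omega>. restrict (X \<omega>) A))
      = (\<integral>\<omega>. k (\<eta> (X \<omega>)) (g (restrict (X \<omega>) A, restrict (X' \<omega>) ({1..d} - A))) \<partial>P)
        - (\<integral>z. case_prod k z \<partial>(distr P N (\<lambda>\<omega>. \<eta> (X \<omega>)) \<Otimes>\<^sub>M distr P N (\<lambda>\<omega>. \<eta> (X \<omega>))))"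
    using integral_MMD2_cond_law[OF P restrict_rv[OF X_rv A] measurable_compose[OF X_rv \<eta>_meas]
        K k_pd k_meas K_int Y_int]
      integral_kernel_square_cond_law_resample[OF P restrict_rv[OF X_rv A] restrict_rv[OF X_rv]
        restrict_rv[OF X'_rv] g distr_pick_freeze[OF X_rv X'_rv X_indep_comp X_X'_indep X'_copy A]
        Y K k_pd k_meas K_int Y_int]
    by simp
  then show ?thesis
    unfolding pick_freeze integral_indep_copy[OF X_X'_indep X'_copy \<eta>_meas k_meas] by simp
qed

end
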